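(* Let $\mathcal J$ be an instance with locations $c_1,\dots,c_k$, and for $i\in[k]$ let $C_i$ be the set of data points located at $c_i$; assume each $C_i$ is $3$-approximately fair. Consider a fairlet decomposition for $(C_1,\dots,C_k)$: for each $i$, $F_i\subseteq C_i$ is a maximal exactly fair subset of $C_i$, decomposed into $|F_i|/f$ fairlets, and $P_i=C_i\setminus F_i$ is the set of problematic points. Then $|P_i|<4f$ for every $i\in[k]$.
   Context: Data points $X$ are partitioned into groups $X_1,\dots,X_\ell$. A set $S$ is exactly fair if $|S\cap X_j|=\frac{|X_j|}{|X|}|S|$ for all $j$. A fairlet is a minimum-size non-empty exactly fair subset of $X$; its size is $f$ and it contains $f_j\ge1$ points of group $j$ (so $f_j/f=|X_j|/|X|$). A set $S$ is $\gamma$-approximately fair if $\bigl||S\cap X_j|-\frac{f_j}{f}|S|\bigr|\le\gamma$ for all $j\in[\ell]$. *)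

theory Defs
  imports Complex_Main
begin

text \<open>Data points X, groups G 0, ..., G (l-1) (a partition of X).\<close>

definition exactly_fair :: "'a set \<Rightarrow> (nat \<Rightarrow> 'a set) \<Rightarrow> nat \<Rightarrow> 'a set \<Rightarrow> bool" where
  "exactly_fair X G l S \<longleftrightarrow>
     (\<forall>j<l. real (card (S \<inter> G j)) = real (card (G j)) / real (card X) * real (card S))"

definition is_fairlet :: "'a set \<Rightarrow> (nat \<Rightarrow> 'a set) \<Rightarrow> nat \<Rightarrow> 'a set \<Rightarrow> bool" where
  "is_fairlet X G l S \<longleftrightarrow> S \<subseteq> X \<and> S \<noteq> {} \<and> exactly_fair X G l S \<and>
     (\<forall>T. T \<subseteq> X \<and> T \<noteq> {} \<and> exactly_fair X G l T \<longrightarrow> card S \<le> card T)"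

definition fairlet_size :: "'a set \<Rightarrow> (nat \<Rightarrow> 'a set) \<Rightarrow> nat \<Rightarrow> nat" where
  "fairlet_size X G l = Min {card S | S. S \<subseteq> X \<and> S \<noteq> {} \<and> exactly_fair X G l S}"

text \<open>f_j = number of points of group j in a fairlet; f_j / f = |X_j| / |X|.\<close>
definition fairlet_count :: "'a set \<Rightarrow> (nat \<Rightarrow> 'a set) \<Rightarrow> nat \<Rightarrow> nat \<Rightarrow> nat" where
  "fairlet_count X G l j = card ((SOME S. is_fairlet X G l S) \<inter> G j)"

definition approx_fair :: "'a set \<Rightarrow> (nat \<Rightarrow> 'a set) \<Rightarrow> nat \<Rightarrow> real \<Rightarrow> 'a set \<Rightarrow> bool" where
  "approx_fair X G l \<gamma> S \<longleftrightarrow>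
     (\<forall>j<l. \<bar>real (card (S \<inter> G j)) -
             real (fairlet_count X G l j) / real (fairlet_size X G l) * real (card S)\<bar> \<le> \<gamma>)"

end

theory Submission
  imports Defs
begin

text \<open>If the problematic points \<open>P = C - F\<close> numbered at least \<open>4 f\<close>, then for every group \<open>j\<close>
  approximate fairness of \<open>C\<close> and exact fairness of \<open>F\<close> would give
  \<open>|P \<inter> X\<^sub>j| \<ge> (f\<^sub>j / f) |P| - 3 \<ge> 4 f\<^sub>j - 3 \<ge> f\<^sub>j\<close>. Taking \<open>f\<^sub>j\<close> points of each group
  from \<open>P\<close> yields a set with the group counts of a fairlet, hence exactly fair, and
  adding it to \<open>F\<close> contradicts the maximality of \<open>F\<close>.\<close>

lemma exactly_fair_self:
  assumes "finite X" "\<forall>j<l. G j \<subseteq> X"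
  shows "exactly_fair X G l X"
  unfolding exactly_fair_def
proof (intro allI impI)
  fix j assume "j < l"
  with assms have "X \<inter> G j = G j" "X = {} \<Longrightarrow> G j = {}" by blast+
  with \<open>finite X\<close> show "real (card (X \<inter> G j)) = real (card (G j)) / real (card X) * real (card X)"
    by (cases "X = {}") auto
qed

lemma fairlet_exists:
  assumes "X \<noteq> {}" "exactly_fair X G l X"
  shows "\<exists>S. is_fairlet X G l S"
proof -
  let ?candidate = "\<lambda>S. S \<subseteq> X \<and> S \<noteq> {} \<and> exactly_fair X G l S"
  obtain S where "?candidate S" "\<forall>T. ?candidate T \<longrightarrow> card S \<le> card T"
    using ex_has_least_nat[of ?candidate X card] assms by blast
  then show ?thesis
    unfolding is_fairlet_def by blast
qed

lemma card_fairlet_eq_fairlet_size: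
  assumes "finite X" "is_fairlet X G l S"
  shows "card S = fairlet_size X G l"
proof -
  let ?sizes = "{card S | S. S \<subseteq> X \<and> S \<noteq> {} \<and> exactly_fair X G l S}"
  have "?sizes \<subseteq> card ` Pow X"
    by auto
  with \<open>finite X\<close> have "finite ?sizes"
    by (meson finite_Pow_iff finite_imageI finite_subset)
  with assms(2) show ?thesis
    unfolding fairlet_size_def is_fairlet_def by (intro Min_eqI[symmetric]) auto
qed

lemma card_eq_sum_group_counts:
  fixes G :: "nat \<Rightarrow> 'a set"
  assumes "finite X" "(\<Union>j<l. G j) = X" "\<forall>j<l. \<forall>j'<l. j \<noteq> j' \<longrightarrow> G j \<inter> G j' = {}"
    and "S \<subseteq> X"
  shows "card S = (\<Sum>j<l. card (S \<inter> G j))"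
proof -
  have "S = (\<Union>j<l. S \<inter> G j)"
    using assms(2,4) by blast
  also have "card \<dots> = (\<Sum>j<l. card (S \<inter> G j))"
    using finite_subset[OF assms(4,1)] assms(3) by (intro card_UN_disjoint) auto
  finally show ?thesis .
qed

lemma exactly_fair_if_same_group_counts:
  assumes "finite X" "(\<Union>j<l. G j) = X" "\<forall>j<l. \<forall>j'<l. j \<noteq> j' \<longrightarrow> G j \<inter> G j' = {}"
    and "S \<subseteq> X" "T \<subseteq> X" "exactly_fair X G l S"
    and same_counts: "\<forall>j<l. card (T \<inter> G j) = card (S \<inter> G j)"
  shows "exactly_fair X G l T"
proof -
  have "card T = card S"
    using card_eq_sum_group_counts[OF assms(1-3)] assms(4,5) same_counts by simp
  with assms(6) same_counts show ?thesis
    unfolding exactly_fair_def by simp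
qed

lemma exactly_fair_Un_disjoint:
  assumes "finite A" "finite B" "A \<inter> B = {}"
    and "exactly_fair X G l A" "exactly_fair X G l B"
  shows "exactly_fair X G l (A \<union> B)"
  unfolding exactly_fair_def
proof (intro allI impI)
  fix j assume "j < l"
  have "(A \<union> B) \<inter> G j = A \<inter> G j \<union> B \<inter> G j"
    by blast
  then have "card ((A \<union> B) \<inter> G j) = card (A \<inter> G j) + card (B \<inter> G j)"
    using assms(1-3) by (simp add: card_Un_disjoint disjoint_iff)
  moreover have "card (A \<union> B) = card A + card B"
    using assms(1-3) by (rule card_Un_disjoint)
  ultimately show "real (card ((A \<union> B) \<inter> G j)) = real (card (G j)) / real (card X) * real (card (A \<union> B))"
    using assms(4,5) \<open>j < l\<close> unfolding exactly_fair_def by (simp add: distrib_left)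
qed

lemma obtain_subset_with_group_counts:
  assumes "\<forall>j<l. \<forall>j'<l. j \<noteq> j' \<longrightarrow> G j \<inter> G j' = {}"
    and "\<forall>j<l. n j \<le> card (P \<inter> G j)"
  obtains T where "T \<subseteq> P" "\<forall>j<l. card (T \<inter> G j) = n j"
proof -
  have "\<exists>V. V \<subseteq> P \<inter> G j \<and> card V = n j" if "j < l" for j
    using obtain_subset_with_card_n assms(2) that by metis
  then obtain U where U: "\<forall>j<l. U j \<subseteq> P \<inter> G j \<and> card (U j) = n j"
    by metis
  have "(\<Union>j'<l. U j') \<inter> G j = U j" if "j < l" for j
    using U assms(1) that by blast
  with U show ?thesis
    by (intro that[of "\<Union>j<l. U j"]) auto
qed

lemma card_Diff_group_ge:
  fixes r \<gamma> :: real
  assumes "finite C" "F \<subseteq> C"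
    and "\<bar>real (card (C \<inter> A)) - r * real (card C)\<bar> \<le> \<gamma>"
    and "real (card (F \<inter> A)) = r * real (card F)"
  shows "r * real (card (C - F)) - \<gamma> \<le> real (card ((C - F) \<inter> A))"
proof -
  have "finite F"
    using assms(1,2) by (rule finite_subset[rotated])
  have "C \<inter> A = F \<inter> A \<union> (C - F) \<inter> A"
    using assms(2) by blast
  then have "card (C \<inter> A) = card (F \<inter> A) + card ((C - F) \<inter> A)"
    using assms(1) \<open>finite F\<close> by (simp add: card_Un_disjoint Int_Diff disjoint_iff)
  moreover have "card C = card F + card (C - F)"
    using card_Diff_subset[OF \<open>finite F\<close> assms(2)] card_mono[OF assms(1,2)] by simp
  then have "r * real (card C) = r * real (card F) + r * real (card (C - F))"
    by (simp add: distrib_left)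
  ultimately show ?thesis
    using assms(3,4) by (simp add: abs_le_iff)
qed

locale group_partition =
  fixes X :: "'a set" and G :: "nat \<Rightarrow> 'a set" and l :: nat
  assumes finite_X: "finite X" and X_nonempty: "X \<noteq> {}"
    and groups_cover: "(\<Union>j<l. G j) = X"
    and groups_disjoint: "\<forall>j<l. \<forall>j'<l. j \<noteq> j' \<longrightarrow> G j \<inter> G j' = {}"
    and groups_nonempty: "\<forall>j<l. G j \<noteq> {}"
begin

lemma groups_subset: "\<forall>j<l. G j \<subseteq> X"
  using groups_cover by blast

definition fairlet :: "'a set" where
  "fairlet = (SOME S. is_fairlet X G l S)"

lemma is_fairlet_fairlet: "is_fairlet X G l fairlet"
  unfolding fairlet_def
  using fairlet_exists[OF X_nonempty exactly_fair_self[OF finite_X groups_subset]] by (rule someI_ex)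

lemma fairlet_count_eq_card: "fairlet_count X G l j = card (fairlet \<inter> G j)"
  unfolding fairlet_count_def fairlet_def ..

lemma fairlet_size_pos: "fairlet_size X G l > 0"
proof -
  have "fairlet \<subseteq> X" "fairlet \<noteq> {}"
    using is_fairlet_fairlet unfolding is_fairlet_def by blast+
  then have "card fairlet > 0"
    using finite_X by (meson card_gt_0_iff finite_subset)
  then show ?thesis
    using card_fairlet_eq_fairlet_size[OF finite_X is_fairlet_fairlet] by simp
qed

lemma fairlet_count_eq:
  assumes "j < l"
  shows "real (fairlet_count X G l j) = real (card (G j)) / real (card X) * real (fairlet_size X G l)"
  using is_fairlet_fairlet assms card_fairlet_eq_fairlet_size[OF finite_X is_fairlet_fairlet]
  unfolding fairlet_count_eq_card is_fairlet_def exactly_fair_def by simp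

lemma fairlet_count_ge_1:
  assumes "j < l"
  shows "1 \<le> fairlet_count X G l j"
proof -
  have "finite (G j)"
    using groups_subset assms finite_X by (blast intro: finite_subset)
  then have "card (G j) > 0" "card X > 0"
    using groups_nonempty assms finite_X X_nonempty by (auto simp: card_gt_0_iff)
  with fairlet_count_eq[OF assms] fairlet_size_pos have "real (fairlet_count X G l j) > 0"
    by simp
  then show ?thesis
    by simp
qed

lemma fairlet_count_le_card_Diff:
  assumes "finite C" "F \<subseteq> C" "approx_fair X G l \<gamma> C" "exactly_fair X G l F"
    and many: "(\<gamma> + 1) * real (fairlet_size X G l) \<le> real (card (C - F))"
    and "j < l"
  shows "fairlet_count X G l j \<le> card ((C - F) \<inter> G j)"
proof -
  let ?r = "real (card (G j)) / real (card X)" and ?c = "real (fairlet_count X G l j)"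
  have "?c / real (fairlet_size X G l) = ?r"
    using fairlet_count_eq[OF \<open>j < l\<close>] fairlet_size_pos by simp
  then have approx_j: "\<bar>real (card (C \<inter> G j)) - ?r * real (card C)\<bar> \<le> \<gamma>"
    using assms(3) \<open>j < l\<close> unfolding approx_fair_def by metis
  moreover have "real (card (F \<inter> G j)) = ?r * real (card F)"
    using assms(4) \<open>j < l\<close> unfolding exactly_fair_def by blast
  ultimately have lower: "?r * real (card (C - F)) - \<gamma> \<le> real (card ((C - F) \<inter> G j))"
    by (rule card_Diff_group_ge[OF assms(1,2)])
  have "(\<gamma> + 1) * ?c = ?r * ((\<gamma> + 1) * real (fairlet_size X G l))"
    using fairlet_count_eq[OF \<open>j < l\<close>] by (simp add: mult.left_commute)
  also have "\<dots> \<le> ?r * real (card (C - F))"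
    using many by (rule mult_left_mono) simp
  finally have "\<gamma> * ?c + ?c \<le> ?r * real (card (C - F))"
    by (simp add: distrib_right)
  moreover have "0 \<le> \<gamma>"
    using approx_j by linarith
  then have "\<gamma> \<le> \<gamma> * ?c"
    using fairlet_count_ge_1[OF \<open>j < l\<close>] by (simp add: mult_le_cancel_left1)
  ultimately have "?c \<le> real (card ((C - F) \<inter> G j))"
    using lower by linarith
  then show ?thesis
    by simp
qed

lemma obtain_exactly_fair_subset:
  assumes "P \<subseteq> X" "\<forall>j<l. fairlet_count X G l j \<le> card (P \<inter> G j)"
  obtains T where "T \<subseteq> P" "T \<noteq> {}" "exactly_fair X G l T"
proof -
  have fairlet: "fairlet \<subseteq> X" "exactly_fair X G l fairlet"
    using is_fairlet_fairlet unfolding is_fairlet_def by blast+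
  from assms(2) have "\<forall>j<l. card (fairlet \<inter> G j) \<le> card (P \<inter> G j)"
    unfolding fairlet_count_eq_card .
  then obtain T where T: "T \<subseteq> P" "\<forall>j<l. card (T \<inter> G j) = card (fairlet \<inter> G j)"
    by (rule obtain_subset_with_group_counts[OF groups_disjoint])
  have "exactly_fair X G l T"
    using exactly_fair_if_same_group_counts[OF finite_X groups_cover groups_disjoint
        fairlet(1) _ fairlet(2) T(2)] T(1) assms(1)
    by blast
  moreover have "l > 0"
    using X_nonempty groups_cover by (auto intro: gr0I)
  then have "card (T \<inter> G 0) \<ge> 1"
    using T(2) fairlet_count_ge_1 unfolding fairlet_count_eq_card by simp
  then have "T \<noteq> {}"
    by auto
  ultimately show ?thesis
    using T(1) that by blast
qed

end

theorem lemma3: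
  fixes X :: "'a set" and G :: "nat \<Rightarrow> 'a set" and l k :: nat
    and C F :: "nat \<Rightarrow> 'a set"
  assumes finX: "finite X" and neX: "X \<noteq> {}"
    and groups_part: "(\<Union>j<l. G j) = X"
    and groups_disj: "\<forall>j<l. \<forall>j'<l. j \<noteq> j' \<longrightarrow> G j \<inter> G j' = {}"
    and groups_ne: "\<forall>j<l. G j \<noteq> {}"
    and locs_part: "(\<Union>i<k. C i) = X"
    and locs_disj: "\<forall>i<k. \<forall>i'<k. i \<noteq> i' \<longrightarrow> C i \<inter> C i' = {}"
    and approx: "\<forall>i<k. approx_fair X G l 3 (C i)"
    and F_sub: "\<forall>i<k. F i \<subseteq> C i"
    and F_fair: "\<forall>i<k. exactly_fair X G l (F i)"
    and F_max: "\<forall>i<k. \<not> (\<exists>H. F i \<subset> H \<and> H \<subseteq> C i \<and> exactly_fair X G l H)"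
  shows "\<forall>i<k. card (C i - F i) < 4 * fairlet_size X G l"
proof (intro allI impI)
  interpret group_partition X G l
    using finX neX groups_part groups_disj groups_ne by (rule group_partition.intro)
  fix i assume "i < k"
  then have "F i \<subseteq> C i" "C i \<subseteq> X" "approx_fair X G l 3 (C i)" "exactly_fair X G l (F i)"
    using F_sub locs_part approx F_fair by auto
  have "finite (C i)"
    using finite_subset[OF \<open>C i \<subseteq> X\<close> finX] .
  then have "finite (F i)"
    using finite_subset[OF \<open>F i \<subseteq> C i\<close>] by blast
  show "card (C i - F i) < 4 * fairlet_size X G l"
  proof (rule ccontr)
    assume "\<not> ?thesis"
    then have "(3 + 1) * real (fairlet_size X G l) \<le> real (card (C i - F i))"
      by simp
    then have "\<forall>j<l. fairlet_count X G l j \<le> card ((C i - F i) \<inter> G j)"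
      using fairlet_count_le_card_Diff[OF \<open>finite (C i)\<close> \<open>F i \<subseteq> C i\<close> \<open>approx_fair X G l 3 (C i)\<close>
          \<open>exactly_fair X G l (F i)\<close>] by blast
    then obtain T where T: "T \<subseteq> C i - F i" "T \<noteq> {}" "exactly_fair X G l T"
      using \<open>C i \<subseteq> X\<close> by (metis obtain_exactly_fair_subset Diff_subset order_trans)
    then have "finite T"
      using \<open>finite (C i)\<close> by (meson Diff_subset finite_subset)
    with T \<open>finite (F i)\<close> \<open>exactly_fair X G l (F i)\<close> have "exactly_fair X G l (F i \<union> T)"
      by (intro exactly_fair_Un_disjoint) auto
    moreover have "F i \<subset> F i \<union> T" "F i \<union> T \<subseteq> C i"
      using T \<open>F i \<subseteq> C i\<close> by auto
    ultimately show False
      using F_max \<open>i < k\<close> by blast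
  qed
qed

end
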